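(* Let $n\ge 2$ and let $M$ be a uniformly random $n\times n$ matrix with independent entries uniform on $\{-1,+1\}$. Let $R_{11}$ be the event that two distinct columns of $M$ are equal up to sign, and $L_{11}$ the event that two distinct rows of $M$ are equal up to sign. Then $$\mathbb{P}(R_{11}\setminus L_{11})\ \ge\ 2\binom n2\Big(\frac12\Big)^n-\Big(12\binom n2^2-4\binom n2\Big)\Big(\frac14\Big)^n,$$ and, as $n\to\infty$, $$\mathbb{P}(R_{11}\setminus L_{11})=\mathbb{P}(R_{11})-8\binom n2^2\Big(\frac14\Big)^n+O\big(n^6 2^{-3n}\big).$$
   Context: Vectors $x,y\in\{-1,1\}^n$ are equal up to sign if $x=\pm y$. Equivalently, $R_{11}$ (resp. $L_{11}$) is the event that $M$ has a right null vector $Mv=0$ (resp. left null vector $vM=0$) of the form $e_i\pm e_j$, $i\ne j$. *)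

theory Defs
  imports "HOL-Probability.Probability" "HOL-Library.Landau_Symbols"
begin

text \<open>n x n sign matrices, indexed by {0..<n} x {0..<n}; entries outside the
  index range are fixed to 0 so that the set is finite.\<close>
definition sign_mats :: "nat \<Rightarrow> (nat \<Rightarrow> nat \<Rightarrow> int) set" where
  "sign_mats n = {M. (\<forall>i j. i < n \<and> j < n \<longrightarrow> M i j \<in> {-1, 1}) \<and>
                      (\<forall>i j. \<not> (i < n \<and> j < n) \<longrightarrow> M i j = 0)}"

definition rand_mat :: "nat \<Rightarrow> (nat \<Rightarrow> nat \<Rightarrow> int) pmf" where
  "rand_mat n = pmf_of_set (sign_mats n)"

definition R11 :: "nat \<Rightarrow> (nat \<Rightarrow> nat \<Rightarrow> int) set" where
  "R11 n = {M \<in> sign_mats n. \<exists>i<n. \<exists>j<n. i \<noteq> j \<and>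
      ((\<forall>k<n. M k i = M k j) \<or> (\<forall>k<n. M k i = - M k j))}"

definition L11 :: "nat \<Rightarrow> (nat \<Rightarrow> nat \<Rightarrow> int) set" where
  "L11 n = {M \<in> sign_mats n. \<exists>i<n. \<exists>j<n. i \<noteq> j \<and>
      ((\<forall>k<n. M i k = M j k) \<or> (\<forall>k<n. M i k = - M j k))}"

end

theory Submission
  imports Defs
begin

(*
  For a random n x n sign matrix, P(R11 - L11) = P(R11) - P(R11 \<inter> L11).
  R11 is the union over the n choose 2 column pairs of the events "the two columns agree up
  to sign", L11 the analogous union over row pairs.  Every event needed below -- at most two
  column pairs and at most two row pairs agreeing up to sign -- is a "pinned" event: a set of
  rows (columns) each tied up to sign to a row (column) outside the set.  A pinned event with
  a tied rows and b tied columns is in bijection with sign choices for the ties and the free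
  cells, so its probability is exactly 2^(a+b+ab) * (2^-(a+b))^n.
*)

definition pm_equal :: "nat \<Rightarrow> (nat \<Rightarrow> int) \<Rightarrow> (nat \<Rightarrow> int) \<Rightarrow> bool" where
  "pm_equal n u v \<longleftrightarrow> (\<exists>t\<in>{-1,1}. \<forall>k<n. u k = t * v k)"

definition col :: "(nat \<Rightarrow> nat \<Rightarrow> int) \<Rightarrow> nat \<Rightarrow> nat \<Rightarrow> int" where
  "col M j = (\<lambda>i. M i j)"

lemma col_apply [simp]: "col M j i = M i j"
  by (simp add: col_def)

lemma sign_mult: "(a::int) \<in> {-1,1} \<Longrightarrow> b \<in> {-1,1} \<Longrightarrow> a * b \<in> {-1,1}"
  by auto

lemma pm_equal_iff: "pm_equal n u v \<longleftrightarrow> (\<forall>k<n. u k = v k) \<or> (\<forall>k<n. u k = - v k)"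
  unfolding pm_equal_def by auto

lemma pm_equal_sym: "pm_equal n u v \<Longrightarrow> pm_equal n v u"
  unfolding pm_equal_iff by auto

lemma pm_equal_sign:
  assumes "pm_equal n u v" "k0 < n" "v k0 \<in> {-1,1}"
  shows "u k0 * v k0 \<in> {-1,1}" and "\<And>k. k < n \<Longrightarrow> u k = u k0 * v k0 * v k"
proof -
  from assms(1) obtain t where t: "t \<in> {-1,1}" "\<forall>k<n. u k = t * v k"
    unfolding pm_equal_def by blast
  have "u k0 * v k0 = t" using t assms(2,3) by auto
  then show "u k0 * v k0 \<in> {-1,1}" "\<And>k. k < n \<Longrightarrow> u k = u k0 * v k0 * v k"
    using t by auto
qed

definition pin_event :: "nat \<Rightarrow> nat set \<Rightarrow> nat set \<Rightarrow> (nat \<Rightarrow> nat) \<Rightarrow> (nat \<Rightarrow> nat)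
    \<Rightarrow> (nat \<Rightarrow> nat \<Rightarrow> int) set" where
  "pin_event n DR DC sr sc = {M \<in> sign_mats n.
     (\<forall>r\<in>DR. pm_equal n (M r) (M (sr r))) \<and> (\<forall>d\<in>DC. pm_equal n (col M d) (col M (sc d)))}"

(* A pinning: rows in DR are tied to rows outside DR, columns in DC to columns outside DC.
   Such an event is in bijection with choices of one sign per tied row, one sign per tied
   column and an arbitrary sign pattern on the free cells (row not in DR, column not in DC). *)
locale pinning =
  fixes n :: nat and DR DC :: "nat set" and sr sc :: "nat \<Rightarrow> nat"
  assumes n_pos: "0 < n"
    and DR_sub: "DR \<subseteq> {..<n}" and DC_sub: "DC \<subseteq> {..<n}"
    and sr: "\<And>r. r \<in> DR \<Longrightarrow> sr r < n \<and> sr r \<notin> DR"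
    and sc: "\<And>d. d \<in> DC \<Longrightarrow> sc d < n \<and> sc d \<notin> DC"
begin

lemma finite_DR: "finite DR" and finite_DC: "finite DC"
  using DR_sub DC_sub finite_subset by auto

(* Some row and some column are not tied; they are used to read off the signs. *)
lemma free_row_exists: obtains x0 where "x0 < n" "x0 \<notin> DR"
proof (cases "DR = {}")
  case True
  then show ?thesis using n_pos that by blast
next
  case False
  then obtain r where "r \<in> DR" by blast
  then show ?thesis using sr that by blast
qed

lemma free_col_exists: obtains y0 where "y0 < n" "y0 \<notin> DC"
proof (cases "DC = {}")
  case True
  then show ?thesis using n_pos that by blast
next
  case False
  then obtain d where "d \<in> DC" by blast
  then show ?thesis using sc that by blast
qed

(* Every row (column) is a signed copy of its base row (column), which is free. *)
definition base_row :: "nat \<Rightarrow> nat" where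
  "base_row x = (if x \<in> DR then sr x else x)"

definition base_col :: "nat \<Rightarrow> nat" where
  "base_col y = (if y \<in> DC then sc y else y)"

definition free_cells :: "(nat \<times> nat) set" where
  "free_cells = ({..<n} - DR) \<times> ({..<n} - DC)"

definition codes :: "((nat \<Rightarrow> int) \<times> (nat \<Rightarrow> int) \<times> (nat \<times> nat \<Rightarrow> int)) set" where
  "codes = PiE DR (\<lambda>_. {-1,1}) \<times> PiE DC (\<lambda>_. {-1,1}) \<times> PiE free_cells (\<lambda>_. {-1,1})"

definition matrix_of :: "(nat \<Rightarrow> int) \<times> (nat \<Rightarrow> int) \<times> (nat \<times> nat \<Rightarrow> int) \<Rightarrow> nat \<Rightarrow> nat \<Rightarrow> int" where
  "matrix_of = (\<lambda>(\<tau>, \<sigma>, f) x y. if x < n \<and> y < n then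
     (if x \<in> DR then \<tau> x else 1) * (if y \<in> DC then \<sigma> y else 1) * f (base_row x, base_col y)
     else 0)"

lemma base_cell_free: "x < n \<Longrightarrow> y < n \<Longrightarrow> (base_row x, base_col y) \<in> free_cells"
  using sr sc unfolding free_cells_def base_row_def base_col_def by auto

lemma card_codes: "card codes = 2 ^ (card DR + card DC + (n - card DR) * (n - card DC))"
proof -
  have "card free_cells = (n - card DR) * (n - card DC)"
    unfolding free_cells_def card_cartesian_product
    using DR_sub DC_sub by (simp add: card_Diff_subset finite_DR finite_DC)
  then show ?thesis
    unfolding codes_def card_cartesian_product
    by (simp add: card_PiE finite_DR finite_DC free_cells_def power_add numeral_2_eq_2 mult.assoc)
qed

lemma mem_codes: "(\<tau>, \<sigma>, f) \<in> codes \<longleftrightarrow>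
    \<tau> \<in> PiE DR (\<lambda>_. {-1,1}) \<and> \<sigma> \<in> PiE DC (\<lambda>_. {-1,1}) \<and> f \<in> PiE free_cells (\<lambda>_. {-1,1})"
  unfolding codes_def by (simp only: mem_Times_iff fst_conv snd_conv)

lemma matrix_of_in_pin_event:
  assumes "c \<in> codes"
  shows "matrix_of c \<in> pin_event n DR DC sr sc"
proof -
  obtain \<tau> \<sigma> f where c: "c = (\<tau>, \<sigma>, f)" by (cases c)
  have mem: "\<tau> \<in> PiE DR (\<lambda>_. {-1,1})" "\<sigma> \<in> PiE DC (\<lambda>_. {-1,1})"
    "f \<in> PiE free_cells (\<lambda>_. {-1,1})"
    using assms unfolding c mem_codes by blast+
  note \<tau> = PiE_mem[OF mem(1)] and \<sigma> = PiE_mem[OF mem(2)] and f = PiE_mem[OF mem(3)]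
  let ?M = "matrix_of (\<tau>, \<sigma>, f)"
  have "?M x y \<in> {-1,1}" if "x < n" "y < n" for x y
  proof -
    have row_sign: "(if x \<in> DR then \<tau> x else 1) \<in> {-1,1}"
      and col_sign: "(if y \<in> DC then \<sigma> y else 1) \<in> {-1,1}"
      using \<tau>[of x] \<sigma>[of y] by auto
    have "?M x y = (if x \<in> DR then \<tau> x else 1) * (if y \<in> DC then \<sigma> y else 1)
        * f (base_row x, base_col y)"
      using that unfolding matrix_of_def by simp
    then show ?thesis
      using sign_mult[OF sign_mult[OF row_sign col_sign] f[OF base_cell_free[OF that]]] by simp
  qed
  moreover have "?M x y = 0" if "\<not> (x < n \<and> y < n)" for x y
    using that by (auto simp: matrix_of_def)
  ultimately have "?M \<in> sign_mats n" unfolding sign_mats_def by blast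
  moreover have "pm_equal n (?M r) (?M (sr r))" if "r \<in> DR" for r
  proof -
    have "\<forall>k<n. ?M r k = \<tau> r * ?M (sr r) k"
      using that sr[OF that] DR_sub unfolding matrix_of_def base_row_def by auto
    then show ?thesis unfolding pm_equal_def using \<tau>[OF that] by blast
  qed
  moreover have "pm_equal n (col ?M d) (col ?M (sc d))" if "d \<in> DC" for d
  proof -
    have "\<forall>k<n. ?M k d = \<sigma> d * ?M k (sc d)"
      using that sc[OF that] DC_sub unfolding matrix_of_def base_col_def by auto
    then show ?thesis unfolding pm_equal_def col_def using \<sigma>[OF that] by blast
  qed
  ultimately show ?thesis unfolding c pin_event_def by blast
qed

(* A code is recovered from its matrix: the free cells directly, the row and column signs
   from a free column y0 and a free row x0. *)
lemma matrix_of_inj: "inj_on matrix_of codes"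
proof (rule inj_onI)
  fix a b assume a: "a \<in> codes" and b: "b \<in> codes" and eq: "matrix_of a = matrix_of b"
  obtain \<tau> \<sigma> f where a_def: "a = (\<tau>, \<sigma>, f)" by (cases a)
  obtain \<tau>' \<sigma>' f' where b_def: "b = (\<tau>', \<sigma>', f')" by (cases b)
  have mem: "\<tau> \<in> PiE DR (\<lambda>_. {-1,1})" "\<sigma> \<in> PiE DC (\<lambda>_. {-1,1})"
    "f \<in> PiE free_cells (\<lambda>_. {-1,1})" "\<tau>' \<in> PiE DR (\<lambda>_. {-1,1})"
    "\<sigma>' \<in> PiE DC (\<lambda>_. {-1,1})" "f' \<in> PiE free_cells (\<lambda>_. {-1,1})"
    using a b unfolding a_def b_def mem_codes by blast+
  have entry: "matrix_of (\<tau>, \<sigma>, f) x y = matrix_of (\<tau>', \<sigma>', f') x y" for x y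
    using eq unfolding a_def b_def by simp
  have "f p = f' p" if "p \<in> free_cells" for p
    using that entry[of "fst p" "snd p"]
    by (auto simp: matrix_of_def free_cells_def base_row_def base_col_def)
  then have f_eq: "f = f'" using mem(3,6) by (rule PiE_ext[rotated 2])
  obtain x0 where x0: "x0 < n" "x0 \<notin> DR" by (rule free_row_exists)
  obtain y0 where y0: "y0 < n" "y0 \<notin> DC" by (rule free_col_exists)
  have "\<tau> r = \<tau>' r" if "r \<in> DR" for r
  proof -
    have "(sr r, y0) \<in> free_cells" using sr[OF that] y0 unfolding free_cells_def by auto
    then have "f (sr r, y0) \<in> {-1,1}" by (rule PiE_mem[OF mem(3)])
    moreover have "\<tau> r * f (sr r, y0) = \<tau>' r * f (sr r, y0)"
      using entry[of r y0] that DR_sub y0 f_eq by (auto simp: matrix_of_def base_row_def base_col_def)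
    ultimately show ?thesis by auto
  qed
  then have "\<tau> = \<tau>'" using mem(1,4) by (rule PiE_ext[rotated 2])
  moreover have "\<sigma> d = \<sigma>' d" if "d \<in> DC" for d
  proof -
    have "(x0, sc d) \<in> free_cells" using sc[OF that] x0 unfolding free_cells_def by auto
    then have "f (x0, sc d) \<in> {-1,1}" by (rule PiE_mem[OF mem(3)])
    moreover have "\<sigma> d * f (x0, sc d) = \<sigma>' d * f (x0, sc d)"
      using entry[of x0 d] that DC_sub x0 f_eq by (auto simp: matrix_of_def base_row_def base_col_def)
    ultimately show ?thesis by auto
  qed
  then have "\<sigma> = \<sigma>'" using mem(2,5) by (rule PiE_ext[rotated 2])
  ultimately show "a = b" using f_eq unfolding a_def b_def by simp
qed

lemma pin_event_row_sign:
  assumes "M \<in> pin_event n DR DC sr sc" "r \<in> DR" "y0 < n"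
  shows "M r y0 * M (sr r) y0 \<in> {-1,1}" and "\<And>y. y < n \<Longrightarrow> M r y = M r y0 * M (sr r) y0 * M (sr r) y"
proof -
  have "pm_equal n (M r) (M (sr r))" "M (sr r) y0 \<in> {-1,1}"
    using assms sr[OF assms(2)] unfolding pin_event_def sign_mats_def by auto
  from pm_equal_sign[OF this(1) assms(3) this(2)]
  show "M r y0 * M (sr r) y0 \<in> {-1,1}" "\<And>y. y < n \<Longrightarrow> M r y = M r y0 * M (sr r) y0 * M (sr r) y" .
qed

lemma pin_event_col_sign:
  assumes "M \<in> pin_event n DR DC sr sc" "d \<in> DC" "x0 < n"
  shows "M x0 d * M x0 (sc d) \<in> {-1,1}" and "\<And>x. x < n \<Longrightarrow> M x d = M x0 d * M x0 (sc d) * M x (sc d)"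
proof -
  have "pm_equal n (col M d) (col M (sc d))" "col M (sc d) x0 \<in> {-1,1}"
    using assms sc[OF assms(2)] unfolding pin_event_def sign_mats_def by auto
  from pm_equal_sign[OF this(1) assms(3) this(2)]
  show "M x0 d * M x0 (sc d) \<in> {-1,1}" "\<And>x. x < n \<Longrightarrow> M x d = M x0 d * M x0 (sc d) * M x (sc d)"
    by simp_all
qed

(* Every matrix of the event factors through its free cells: an entry is its base entry
   times the sign of its row and the sign of its column relative to their bases. *)
lemma pin_event_subset_matrix_of: "pin_event n DR DC sr sc \<subseteq> matrix_of ` codes"
proof
  fix M assume M: "M \<in> pin_event n DR DC sr sc"
  have entries: "\<And>x y. x < n \<Longrightarrow> y < n \<Longrightarrow> M x y \<in> {-1,1}"
    and outside: "\<And>x y. \<not> (x < n \<and> y < n) \<Longrightarrow> M x y = 0"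
    using M unfolding pin_event_def sign_mats_def by auto
  obtain x0 where x0: "x0 < n" "x0 \<notin> DR" by (rule free_row_exists)
  obtain y0 where y0: "y0 < n" "y0 \<notin> DC" by (rule free_col_exists)
  define \<tau> where "\<tau> = restrict (\<lambda>r. M r y0 * M (sr r) y0) DR"
  define \<sigma> where "\<sigma> = restrict (\<lambda>d. M x0 d * M x0 (sc d)) DC"
  define f where "f = restrict (\<lambda>(x, y). M x y) free_cells"
  note row_sign = pin_event_row_sign[OF M _ y0(1)] and col_sign = pin_event_col_sign[OF M _ x0(1)]
  have "(\<tau>, \<sigma>, f) \<in> codes"
    using row_sign(1) col_sign(1) entries unfolding codes_def \<tau>_def \<sigma>_def f_def free_cells_def
    by auto
  moreover have "matrix_of (\<tau>, \<sigma>, f) = M"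
  proof (intro ext)
    fix x y
    show "matrix_of (\<tau>, \<sigma>, f) x y = M x y"
    proof (cases "x < n \<and> y < n")
      case True
      then have "f (base_row x, base_col y) = M (base_row x) (base_col y)"
        using base_cell_free unfolding f_def by auto
      moreover have "M x y = (if x \<in> DR then \<tau> x else 1) * M (base_row x) y"
        using True row_sign(2) unfolding base_row_def \<tau>_def by auto
      moreover have "M (base_row x) y = (if y \<in> DC then \<sigma> y else 1) * M (base_row x) (base_col y)"
        using True col_sign(2) sr unfolding base_row_def base_col_def \<sigma>_def by auto
      ultimately show ?thesis using True unfolding matrix_of_def by simp
    next
      case False
      then show ?thesis using outside unfolding matrix_of_def by auto
    qed
  qed
  ultimately show "M \<in> matrix_of ` codes" by (metis image_eqI)
qed

lemma card_pin_event:
  "card (pin_event n DR DC sr sc) = 2 ^ (card DR + card DC + (n - card DR) * (n - card DC))"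
proof -
  have "pin_event n DR DC sr sc = matrix_of ` codes"
    using matrix_of_in_pin_event pin_event_subset_matrix_of by blast
  then show ?thesis using card_image[OF matrix_of_inj] card_codes by simp
qed

end

(* With nothing tied the pinned event is the whole sample space. *)
lemma card_sign_mats: "0 < n \<Longrightarrow> card (sign_mats n) = 2 ^ (n * n)"
proof -
  assume "0 < n"
  then interpret pinning n "{}" "{}" id id by unfold_locales auto
  have "sign_mats n = pin_event n {} {} id id" unfolding pin_event_def by auto
  then show ?thesis using card_pin_event by simp
qed

lemma power_two_ratio:
  fixes a b n :: nat
  assumes "a \<le> n" "b \<le> n"
  shows "(2::real) ^ (a + b + (n - a) * (n - b)) / 2 ^ (n * n)
    = 2 ^ (a + b + a * b) * (1 / 2 ^ (a + b)) ^ n"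
proof -
  have "(n - a) * (n - b) + n * (a + b) = n * n + a * b"
  proof -
    have diff: "int (n - a) = int n - int a" "int (n - b) = int n - int b" using assms by auto
    have "int ((n - a) * (n - b) + n * (a + b)) = int (n - a) * int (n - b) + int n * (int a + int b)"
      by simp
    also have "\<dots> = int (n * n + a * b)" unfolding diff by (simp add: algebra_simps)
    finally show ?thesis by (simp only: of_nat_eq_iff)
  qed
  then have "(2::real) ^ (a + b + (n - a) * (n - b)) * 2 ^ (n * (a + b))
      = 2 ^ (a + b + a * b) * 2 ^ (n * n)"
    unfolding power_add[symmetric] by (simp add: algebra_simps)
  moreover have "(1 / 2 ^ (a + b)) ^ n = 1 / (2::real) ^ (n * (a + b))"
    by (simp add: power_one_over flip: power_mult)
  ultimately show ?thesis by (simp add: field_simps)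
qed

lemma (in pinning) prob_pin_event:
  "measure_pmf.prob (rand_mat n) (pin_event n DR DC sr sc)
     = 2 ^ (card DR + card DC + card DR * card DC) * (1 / 2 ^ (card DR + card DC)) ^ n"
proof -
  have card_le: "card DR \<le> n" "card DC \<le> n"
    using card_mono[OF _ DR_sub] card_mono[OF _ DC_sub] by auto
  have "sign_mats n \<noteq> {}" "finite (sign_mats n)"
    using card_sign_mats[OF n_pos] card.infinite by fastforce+
  then have "measure_pmf.prob (rand_mat n) (pin_event n DR DC sr sc)
      = card (sign_mats n \<inter> pin_event n DR DC sr sc) / card (sign_mats n)"
    unfolding rand_mat_def by (rule measure_pmf_of_set)
  also have "sign_mats n \<inter> pin_event n DR DC sr sc = pin_event n DR DC sr sc"
    unfolding pin_event_def by auto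
  also have "real (card (pin_event n DR DC sr sc)) / card (sign_mats n)
      = 2 ^ (card DR + card DC + card DR * card DC) * (1 / 2 ^ (card DR + card DC)) ^ n"
    using card_pin_event card_sign_mats[OF n_pos] power_two_ratio[OF card_le] by simp
  finally show ?thesis .
qed

definition Pairs :: "nat \<Rightarrow> (nat \<times> nat) set" where
  "Pairs n = {(i, j). i < j \<and> j < n}"

lemma finite_Pairs: "finite (Pairs n)"
  by (rule finite_subset[of _ "{..<n} \<times> {..<n}"]) (auto simp: Pairs_def)

lemma card_Pairs: "card (Pairs n) = n choose 2"
proof (induction n)
  case 0
  then show ?case by (simp add: Pairs_def)
next
  case (Suc n)
  have "Pairs (Suc n) = Pairs n \<union> (\<lambda>i. (i, n)) ` {..<n}"
    and "Pairs n \<inter> (\<lambda>i. (i, n)) ` {..<n} = {}"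
    unfolding Pairs_def by auto
  then have "card (Pairs (Suc n)) = card (Pairs n) + card ((\<lambda>i. (i, n)) ` {..<n})"
    using finite_Pairs by (simp add: card_Un_disjoint)
  also have "card ((\<lambda>i. (i, n)) ` {..<n}) = n"
    by (subst card_image) (auto simp: inj_on_def)
  finally show ?case using Suc by (simp add: numeral_2_eq_2 choose_one)
qed

lemma ex_pair_iff:
  assumes "\<And>i j. P i j \<Longrightarrow> P j i"
  shows "(\<exists>i<n. \<exists>j<n. i \<noteq> j \<and> P i j) \<longleftrightarrow> (\<exists>(i, j)\<in>Pairs n. P i j)"
proof
  assume "\<exists>i<n. \<exists>j<n. i \<noteq> j \<and> P i j"
  then obtain i j where "i < n" "j < n" "i \<noteq> j" "P i j" by blast
  then show "\<exists>(i, j)\<in>Pairs n. P i j"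
    using assms unfolding Pairs_def by (cases "i < j") (auto simp: not_less_iff_gr_or_eq)
next
  assume "\<exists>(i, j)\<in>Pairs n. P i j"
  then obtain i j where "i < j" "j < n" "P i j" unfolding Pairs_def by blast
  then show "\<exists>i<n. \<exists>j<n. i \<noteq> j \<and> P i j" by (intro exI[of _ i] exI[of _ j]) auto
qed

lemma two_pairs_pinning:
  fixes rel :: "'m \<Rightarrow> nat \<Rightarrow> nat \<Rightarrow> bool"
  assumes sym: "\<And>M a b. rel M a b \<Longrightarrow> rel M b a"
    and pairs: "(i, j) \<in> Pairs n" "(i', j') \<in> Pairs n" and ne: "(i, j) \<noteq> (i', j')"
  obtains d1 d2 s1 s2 where "d1 \<noteq> d2" "s1 \<notin> {d1, d2}" "s2 \<notin> {d1, d2}"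
    "d1 < n" "d2 < n" "s1 < n" "s2 < n"
    "\<And>M. rel M i j \<and> rel M i' j' \<longleftrightarrow> rel M d1 s1 \<and> rel M d2 s2"
proof -
  have ij: "i < j" "j < n" "i' < j'" "j' < n" using pairs unfolding Pairs_def by auto
  consider "j' \<notin> {i, j}" "j = i'" | "j' \<notin> {i, j}" "j \<noteq> i'" | "j' = j" | "j' = i"
    by blast
  then show ?thesis
  proof cases
    case 1
    show ?thesis by (rule that[of i j' j i']) (use 1 ij sym in auto)
  next
    case 2
    show ?thesis by (rule that[of j j' i i']) (use 2 ij sym in auto)
  next
    case 3
    show ?thesis by (rule that[of i i' j j']) (use 3 ne ij sym in auto)
  next
    case 4
    show ?thesis by (rule that[of j i' i j']) (use 4 ij sym in auto)
  qed
qed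

lemma pairs_pinning:
  fixes rel :: "'m \<Rightarrow> nat \<Rightarrow> nat \<Rightarrow> bool"
  assumes sym: "\<And>M a b. rel M a b \<Longrightarrow> rel M b a"
    and S: "S \<subseteq> Pairs n" "card S \<le> 2"
  obtains D s where "D \<subseteq> {..<n}" "card D = card S" "\<And>d. d \<in> D \<Longrightarrow> s d < n \<and> s d \<notin> D"
    "\<And>M. (\<forall>(i, j)\<in>S. rel M i j) \<longleftrightarrow> (\<forall>d\<in>D. rel M d (s d))"
proof -
  have "finite S" using S(1) finite_Pairs finite_subset by blast
  moreover have "card S = 0 \<or> card S = 1 \<or> card S = 2" using S(2) by linarith
  ultimately consider "S = {}" | "card S = 1" | "card S = 2" by auto
  then show ?thesis
  proof cases
    case 1
    show ?thesis by (rule that[of "{}"]) (use 1 in auto)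
  next
    case 2
    then obtain i j where S_eq: "S = {(i, j)}" by (auto simp: card_1_singleton_iff)
    then have "i < j" "j < n" using S(1) unfolding Pairs_def by auto
    then show ?thesis by (intro that[of "{i}" "\<lambda>_. j"]) (auto simp: S_eq)
  next
    case 3
    then obtain p p' where S_eq: "S = {p, p'}" and "p \<noteq> p'" by (auto simp: card_2_iff)
    obtain i j i' j' where pp: "p = (i, j)" "p' = (i', j')" by (cases p, cases p')
    have pairs: "(i, j) \<in> Pairs n" "(i', j') \<in> Pairs n" "(i, j) \<noteq> (i', j')"
      using S(1) \<open>p \<noteq> p'\<close> unfolding S_eq pp by auto
    obtain d1 d2 s1 s2 where d: "d1 \<noteq> d2" "s1 \<notin> {d1, d2}" "s2 \<notin> {d1, d2}"
        "d1 < n" "d2 < n" "s1 < n" "s2 < n"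
      and rel: "\<And>M. rel M i j \<and> rel M i' j' \<longleftrightarrow> rel M d1 s1 \<and> rel M d2 s2"
      using two_pairs_pinning[where rel = rel, OF sym pairs] by blast
    show ?thesis
      by (rule that[of "{d1, d2}" "\<lambda>d. if d = d1 then s1 else s2"])
        (use d rel \<open>p \<noteq> p'\<close> in \<open>auto simp: S_eq pp card_2_iff\<close>)
  qed
qed

definition pair_event :: "nat \<Rightarrow> (nat \<times> nat) set \<Rightarrow> (nat \<times> nat) set \<Rightarrow> (nat \<Rightarrow> nat \<Rightarrow> int) set" where
  "pair_event n PR PC = {M \<in> sign_mats n.
     (\<forall>(i, j)\<in>PR. pm_equal n (M i) (M j)) \<and> (\<forall>(i, j)\<in>PC. pm_equal n (col M i) (col M j))}"

lemma pair_event_Int: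
  "pair_event n PR PC \<inter> pair_event n PR' PC' = pair_event n (PR \<union> PR') (PC \<union> PC')"
  unfolding pair_event_def by auto

lemma prob_pair_event:
  assumes "0 < n" "PR \<subseteq> Pairs n" "PC \<subseteq> Pairs n" "card PR \<le> 2" "card PC \<le> 2"
  shows "measure_pmf.prob (rand_mat n) (pair_event n PR PC)
    = 2 ^ (card PR + card PC + card PR * card PC) * (1 / 2 ^ (card PR + card PC)) ^ n"
proof -
  obtain DR sr where DR: "DR \<subseteq> {..<n}" "card DR = card PR" "\<And>r. r \<in> DR \<Longrightarrow> sr r < n \<and> sr r \<notin> DR"
    and rows: "\<And>M. (\<forall>(i, j)\<in>PR. pm_equal n (M i) (M j)) \<longleftrightarrow> (\<forall>r\<in>DR. pm_equal n (M r) (M (sr r)))"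
    using pairs_pinning[of "\<lambda>M i j. pm_equal n (M i) (M j)", OF pm_equal_sym assms(2,4)] by blast
  obtain DC sc where DC: "DC \<subseteq> {..<n}" "card DC = card PC" "\<And>d. d \<in> DC \<Longrightarrow> sc d < n \<and> sc d \<notin> DC"
    and cols: "\<And>M. (\<forall>(i, j)\<in>PC. pm_equal n (col M i) (col M j))
       \<longleftrightarrow> (\<forall>d\<in>DC. pm_equal n (col M d) (col M (sc d)))"
    using pairs_pinning[of "\<lambda>M i j. pm_equal n (col M i) (col M j)", OF pm_equal_sym assms(3,5)]
    by blast
  interpret pinning n DR DC sr sc
    using assms(1) DR DC by unfold_locales auto
  have "pair_event n PR PC = pin_event n DR DC sr sc"
    unfolding pair_event_def pin_event_def rows cols ..
  then show ?thesis using prob_pin_event DR(2) DC(2) by simp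
qed

lemma R11_eq: "R11 n = (\<Union>p\<in>Pairs n. pair_event n {} {p})"
proof -
  have "M \<in> R11 n \<longleftrightarrow> M \<in> sign_mats n \<and>
      (\<exists>i<n. \<exists>j<n. i \<noteq> j \<and> pm_equal n (col M i) (col M j))" for M
    unfolding R11_def pm_equal_iff by simp
  also have "\<dots> M \<longleftrightarrow> M \<in> sign_mats n \<and> (\<exists>(i, j)\<in>Pairs n. pm_equal n (col M i) (col M j))" for M
    using ex_pair_iff[of "\<lambda>i j. pm_equal n (col M i) (col M j)"] pm_equal_sym by blast
  finally show ?thesis unfolding pair_event_def by auto
qed

lemma L11_eq: "L11 n = (\<Union>q\<in>Pairs n. pair_event n {q} {})"
proof -
  have "M \<in> L11 n \<longleftrightarrow> M \<in> sign_mats n \<and>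
      (\<exists>i<n. \<exists>j<n. i \<noteq> j \<and> pm_equal n (M i) (M j))" for M
    unfolding L11_def pm_equal_iff by simp
  also have "\<dots> M \<longleftrightarrow> M \<in> sign_mats n \<and> (\<exists>(i, j)\<in>Pairs n. pm_equal n (M i) (M j))" for M
    using ex_pair_iff[of "\<lambda>i j. pm_equal n (M i) (M j)"] pm_equal_sym by blast
  finally show ?thesis unfolding pair_event_def by auto
qed

lemma Pairs_pos: "p \<in> Pairs n \<Longrightarrow> 0 < n"
  unfolding Pairs_def by auto

lemma prob_col_pair:
  "p \<in> Pairs n \<Longrightarrow> measure_pmf.prob (rand_mat n) (pair_event n {} {p}) = 2 * (1/2) ^ n"
  using prob_pair_event[of n "{}" "{p}"] Pairs_pos by simp

lemma prob_two_col_pairs: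
  "p \<in> Pairs n \<Longrightarrow> p' \<in> Pairs n \<Longrightarrow> p \<noteq> p' \<Longrightarrow>
    measure_pmf.prob (rand_mat n) (pair_event n {} {p, p'}) = 4 * (1/4) ^ n"
  using prob_pair_event[of n "{}" "{p, p'}"] Pairs_pos by simp

lemma prob_row_col_pair:
  "p \<in> Pairs n \<Longrightarrow> q \<in> Pairs n \<Longrightarrow>
    measure_pmf.prob (rand_mat n) (pair_event n {q} {p}) = 8 * (1/4) ^ n"
  using prob_pair_event[of n "{q}" "{p}"] Pairs_pos by simp

lemma prob_two_row_col_pairs:
  assumes "p \<in> Pairs n" "p' \<in> Pairs n" "q \<in> Pairs n" "q' \<in> Pairs n" "(p, q) \<noteq> (p', q')"
  shows "measure_pmf.prob (rand_mat n) (pair_event n {q, q'} {p, p'})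
    \<le> (if p = p' then 32 * (1/8) ^ n else 0) + (if q = q' then 32 * (1/8) ^ n else 0)
       + 256 * (1/16) ^ n"
  using prob_pair_event[of n "{q, q'}" "{p, p'}"] Pairs_pos[OF assms(1)] assms
  by (cases "p = p'"; cases "q = q'") simp_all

lemma bonferroni_lower:
  fixes p :: "'a pmf" and E :: "'i \<Rightarrow> 'a set"
  assumes "finite I"
  shows "measure_pmf.prob p (\<Union>i\<in>I. E i) \<ge> (\<Sum>i\<in>I. measure_pmf.prob p (E i))
           - (\<Sum>i\<in>I. \<Sum>j\<in>I - {i}. measure_pmf.prob p (E i \<inter> E j))"
  using assms
proof (induction I rule: finite_induct)
  case empty
  show ?case by simp
next
  case (insert a I)
  let ?P = "measure_pmf.prob p"
  let ?U = "\<Union>i\<in>I. E i"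
  define T where "T = (\<Sum>j\<in>I. ?P (E a \<inter> E j))"
  have "?P (E a \<union> ?U) = ?P (E a) + ?P (?U - E a)"
    by (rule measure_pmf.finite_measure_Union') auto
  also have "?P (?U - E a) = ?P ?U - ?P (?U \<inter> E a)"
    by (rule measure_pmf.finite_measure_Diff') auto
  finally have union: "?P (E a \<union> ?U) = ?P (E a) + ?P ?U - ?P (?U \<inter> E a)" by simp
  have "?U \<inter> E a = (\<Union>j\<in>I. E a \<inter> E j)" by auto
  then have overlap: "?P (?U \<inter> E a) \<le> T"
    unfolding T_def
    using measure_pmf.finite_measure_subadditive_finite[OF insert(1), of "\<lambda>j. E a \<inter> E j"] by simp
  have "(\<Sum>j\<in>insert a I - {i}. ?P (E i \<inter> E j)) = ?P (E a \<inter> E i) + (\<Sum>j\<in>I - {i}. ?P (E i \<inter> E j))"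
    if "i \<in> I" for i
  proof -
    have "insert a I - {i} = insert a (I - {i})" using that insert(2) by auto
    then show ?thesis using insert(1,2) by (simp add: Int_commute)
  qed
  then have "(\<Sum>i\<in>insert a I. \<Sum>j\<in>insert a I - {i}. ?P (E i \<inter> E j))
      = T + (T + (\<Sum>i\<in>I. \<Sum>j\<in>I - {i}. ?P (E i \<inter> E j)))"
    using insert(1,2) unfolding T_def by (simp add: sum.distrib insert_Diff_if)
  moreover have "T \<ge> 0" unfolding T_def by (simp add: sum_nonneg)
  moreover have "(\<Sum>i\<in>insert a I. ?P (E i)) = ?P (E a) + (\<Sum>i\<in>I. ?P (E i))"
    using insert(1,2) by simp
  ultimately show ?case using union overlap insert(3) by simp
qed

lemma prob_R11_lower:
  fixes n :: nat
  defines "N \<equiv> real (n choose 2)"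
  shows "measure_pmf.prob (rand_mat n) (R11 n) \<ge> N * (2 * (1/2) ^ n) - N * (N - 1) * (4 * (1/4) ^ n)"
proof -
  let ?P = "measure_pmf.prob (rand_mat n)"
  let ?E = "\<lambda>p. pair_event n {} {p}"
  have "?P (R11 n) \<ge> (\<Sum>p\<in>Pairs n. ?P (?E p)) - (\<Sum>p\<in>Pairs n. \<Sum>p'\<in>Pairs n - {p}. ?P (?E p \<inter> ?E p'))"
    unfolding R11_eq by (rule bonferroni_lower[OF finite_Pairs])
  moreover have "(\<Sum>p\<in>Pairs n. ?P (?E p)) = N * (2 * (1/2) ^ n)"
    using prob_col_pair by (simp add: N_def card_Pairs)
  moreover have "(\<Sum>p'\<in>Pairs n - {p}. ?P (?E p \<inter> ?E p')) = (N - 1) * (4 * (1/4) ^ n)"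
    if p: "p \<in> Pairs n" for p
  proof -
    have "(\<Sum>p'\<in>Pairs n - {p}. ?P (?E p \<inter> ?E p')) = (\<Sum>p'\<in>Pairs n - {p}. 4 * (1/4) ^ n)"
      using prob_two_col_pairs[OF p] by (intro sum.cong) (auto simp: pair_event_Int insert_commute)
    also have "\<dots> = (N - 1) * (4 * (1/4) ^ n)"
    proof -
      have "1 \<le> card (Pairs n)" using p finite_Pairs by (auto simp: Suc_le_eq card_gt_0_iff)
      then have "real (card (Pairs n - {p})) = N - 1"
        using p by (simp add: N_def card_Pairs[symmetric] card_Diff_singleton of_nat_diff)
      then show ?thesis by simp
    qed
    finally show ?thesis .
  qed
  then have "(\<Sum>p\<in>Pairs n. \<Sum>p'\<in>Pairs n - {p}. ?P (?E p \<inter> ?E p')) = N * ((N - 1) * (4 * (1/4) ^ n))"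
    by (simp add: N_def card_Pairs)
  ultimately show ?thesis by (simp add: algebra_simps)
qed

lemma R11_Int_L11_eq: "R11 n \<inter> L11 n = (\<Union>c\<in>Pairs n \<times> Pairs n. pair_event n {snd c} {fst c})"
proof -
  have "R11 n \<inter> L11 n
      = (\<Union>c\<in>Pairs n \<times> Pairs n. pair_event n {} {fst c} \<inter> pair_event n {snd c} {})"
    unfolding R11_eq L11_eq by auto
  then show ?thesis by (simp add: pair_event_Int)
qed

lemma prob_R11_L11_upper:
  fixes n :: nat
  defines "N \<equiv> real (n choose 2)"
  shows "measure_pmf.prob (rand_mat n) (R11 n \<inter> L11 n) \<le> N * N * (8 * (1/4) ^ n)"
proof -
  let ?P = "measure_pmf.prob (rand_mat n)"
  have "?P (R11 n \<inter> L11 n) \<le> (\<Sum>c\<in>Pairs n \<times> Pairs n. ?P (pair_event n {snd c} {fst c}))"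
    unfolding R11_Int_L11_eq
    by (rule measure_pmf.finite_measure_subadditive_finite) (auto simp: finite_Pairs)
  also have "\<dots> = (\<Sum>c\<in>Pairs n \<times> Pairs n. 8 * (1/4) ^ n)"
    by (intro sum.cong) (auto simp: prob_row_col_pair)
  also have "\<dots> = N * N * (8 * (1/4) ^ n)"
    by (simp add: N_def card_Pairs card_cartesian_product)
  finally show ?thesis .
qed

(* The second-order terms of the Bonferroni bound for P(R11 \<inter> L11): a term distinct from a
   fixed one shares its column pair, shares its row pair, or shares neither; the overlaps
   cost at most 32/8^n, 32/8^n and 256/16^n respectively. *)
lemma R11_L11_overlaps:
  fixes n :: nat
  defines "N \<equiv> real (n choose 2)"
    and "E \<equiv> \<lambda>c. pair_event n {snd c} {fst c}"
  assumes c: "c \<in> Pairs n \<times> Pairs n"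
  shows "(\<Sum>c'\<in>Pairs n \<times> Pairs n - {c}. measure_pmf.prob (rand_mat n) (E c \<inter> E c'))
    \<le> 2 * N * (32 * (1/8) ^ n) + N * N * (256 * (1/16) ^ n)"
proof -
  let ?I = "Pairs n \<times> Pairs n"
  define K :: real where "K = 32 * (1/8) ^ n"
  define L :: real where "L = 256 * (1/16) ^ n"
  define g where "g c' = (if fst c = fst c' then K else 0) + (if snd c = snd c' then K else 0) + L"
    for c'
  have "(\<Sum>c'\<in>?I - {c}. measure_pmf.prob (rand_mat n) (E c \<inter> E c')) \<le> (\<Sum>c'\<in>?I - {c}. g c')"
  proof (rule sum_mono)
    fix c' assume c': "c' \<in> ?I - {c}"
    obtain p q p' q' where pq: "c = (p, q)" "c' = (p', q')" by (cases c, cases c')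
    have "E c \<inter> E c' = pair_event n {q, q'} {p, p'}"
      unfolding pq E_def by (simp add: pair_event_Int insert_commute)
    then show "measure_pmf.prob (rand_mat n) (E c \<inter> E c') \<le> g c'"
      using c c' prob_two_row_col_pairs[of p n p' q q'] unfolding pq g_def K_def L_def by auto
  qed
  also have "\<dots> \<le> (\<Sum>c'\<in>?I. g c')"
    using finite_Pairs by (intro sum_mono2) (auto simp: g_def K_def L_def)
  also have "\<dots> = K * card (Pairs n) + K * card (Pairs n) + L * card ?I"
    using c finite_Pairs
    by (simp add: g_def sum.distrib sum.cartesian_product' sum.If_cases mem_Times_iff flip: sum_distrib_left)
  also have "\<dots> = 2 * N * K + N * N * L"
    by (simp add: N_def card_Pairs card_cartesian_product algebra_simps)
  finally show ?thesis unfolding K_def L_def .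
qed

lemma prob_R11_L11_lower:
  fixes n :: nat
  defines "N \<equiv> real (n choose 2)"
  shows "measure_pmf.prob (rand_mat n) (R11 n \<inter> L11 n) \<ge> N * N * (8 * (1/4) ^ n)
     - N * N * (2 * N * (32 * (1/8) ^ n) + N * N * (256 * (1/16) ^ n))"
proof -
  let ?P = "measure_pmf.prob (rand_mat n)"
  let ?I = "Pairs n \<times> Pairs n"
  let ?E = "\<lambda>c. pair_event n {snd c} {fst c}"
  have card_I: "real (card ?I) = N * N" by (simp add: N_def card_Pairs card_cartesian_product)
  have "?P (R11 n \<inter> L11 n) \<ge> (\<Sum>c\<in>?I. ?P (?E c)) - (\<Sum>c\<in>?I. \<Sum>c'\<in>?I - {c}. ?P (?E c \<inter> ?E c'))"
    unfolding R11_Int_L11_eq using finite_Pairs by (intro bonferroni_lower) simp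
  moreover have "(\<Sum>c\<in>?I. ?P (?E c)) = (\<Sum>c\<in>?I. 8 * (1/4) ^ n)"
    by (intro sum.cong) (auto simp: prob_row_col_pair)
  moreover have "(\<Sum>c\<in>?I. \<Sum>c'\<in>?I - {c}. ?P (?E c \<inter> ?E c'))
      \<le> (\<Sum>c\<in>?I. 2 * N * (32 * (1/8) ^ n) + N * N * (256 * (1/16) ^ n))"
    using R11_L11_overlaps[of _ n] unfolding N_def by (intro sum_mono) simp
  ultimately show ?thesis using card_I by simp
qed

lemma prob_R11_minus_L11:
  "measure_pmf.prob (rand_mat n) (R11 n - L11 n)
    = measure_pmf.prob (rand_mat n) (R11 n) - measure_pmf.prob (rand_mat n) (R11 n \<inter> L11 n)"
  by (rule measure_pmf.finite_measure_Diff') auto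

lemma prob_R11_minus_L11_lower:
  "measure_pmf.prob (rand_mat n) (R11 n - L11 n) \<ge>
     2 * real (n choose 2) * (1/2) ^ n
     - (12 * real (n choose 2) ^ 2 - 4 * real (n choose 2)) * (1/4) ^ n"
  using prob_R11_lower[of n] prob_R11_L11_upper[of n]
  unfolding prob_R11_minus_L11 by (simp add: algebra_simps power2_eq_square)

lemma square_le_two_power: "4 \<le> n \<Longrightarrow> n ^ 2 \<le> (2::nat) ^ n"
proof (induction n rule: nat_induct_at_least)
  case base
  then show ?case by simp
next
  case (Suc n)
  have "(Suc n) ^ 2 = n * n + 2 * n + 1" by (simp add: power2_eq_square)
  also have "\<dots> \<le> 2 * n ^ 2"
    using Suc.hyps mult_right_mono[OF Suc.hyps, of n] unfolding power2_eq_square by linarith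
  also have "\<dots> \<le> 2 * 2 ^ n" using Suc.IH by simp
  finally show ?case by simp
qed

lemma overlap_terms_bound:
  fixes N :: real
  assumes "4 \<le> n" "0 \<le> N" "N \<le> real n ^ 2"
  shows "64 * N ^ 3 * (1/8) ^ n + 256 * N ^ 4 * (1/16) ^ n \<le> 320 * (real n ^ 6 * (1/8) ^ n)"
proof -
  have "real n ^ 2 \<le> 2 ^ n"
    using square_le_two_power[OF assms(1)] by (metis of_nat_le_iff of_nat_numeral of_nat_power)
  then have small: "real n ^ 2 * (1/2) ^ n \<le> 1" by (simp add: field_simps power_one_over)
  have "N ^ 3 \<le> real n ^ 6" and "N ^ 4 \<le> real n ^ 8"
    using power_mono[OF assms(3) assms(2), of 3] power_mono[OF assms(3) assms(2), of 4]
    by (simp_all flip: power_mult)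
  then have "N ^ 3 * (1/8) ^ n \<le> real n ^ 6 * (1/8) ^ n"
    and "N ^ 4 * (1/16) ^ n \<le> (real n ^ 6 * (1/8) ^ n) * (real n ^ 2 * (1/2) ^ n)"
    by (auto intro!: mult_right_mono simp: algebra_simps power_add[symmetric]
        simp flip: power_mult_distrib)
  moreover have "(real n ^ 6 * (1/8) ^ n) * (real n ^ 2 * (1/2) ^ n) \<le> real n ^ 6 * (1/8) ^ n"
    using small by (intro mult_left_le) simp_all
  ultimately show ?thesis by linarith
qed

lemma prob_R11_minus_L11_error:
  assumes "4 \<le> n"
  shows "\<bar>measure_pmf.prob (rand_mat n) (R11 n - L11 n)
           - (measure_pmf.prob (rand_mat n) (R11 n) - 8 * real (n choose 2) ^ 2 * (1/4) ^ n)\<bar>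
         \<le> 320 * (real n ^ 6 * (1/8) ^ n)"
proof -
  define N where "N = real (n choose 2)"
  have "n choose 2 \<le> n ^ 2" by (rule binomial_le_pow) (use assms in simp)
  then have "N \<le> real n ^ 2" unfolding N_def by (metis of_nat_le_iff of_nat_power)
  moreover have "0 \<le> N" unfolding N_def by simp
  ultimately have "64 * N ^ 3 * (1/8) ^ n + 256 * N ^ 4 * (1/16) ^ n \<le> 320 * (real n ^ 6 * (1/8) ^ n)"
    using overlap_terms_bound[OF assms] by simp
  moreover have "N * N * (2 * N * (32 * (1/8) ^ n) + N * N * (256 * (1/16) ^ n))
      = 64 * N ^ 3 * (1/8) ^ n + 256 * N ^ 4 * (1/16) ^ n"
    by (simp add: algebra_simps power3_eq_cube power4_eq_xxxx)
  moreover have "measure_pmf.prob (rand_mat n) (R11 n - L11 n)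
        - (measure_pmf.prob (rand_mat n) (R11 n) - 8 * real (n choose 2) ^ 2 * (1/4) ^ n)
      = N * N * (8 * (1/4) ^ n) - measure_pmf.prob (rand_mat n) (R11 n \<inter> L11 n)"
    unfolding prob_R11_minus_L11 N_def by (simp add: power2_eq_square)
  ultimately show ?thesis
    using prob_R11_L11_upper[of n] prob_R11_L11_lower[of n] unfolding N_def[symmetric] by linarith
qed

lemma two_powr_minus_three_times: "(2::real) powr (- 3 * real n) = (1/8) ^ n"
proof -
  have "(2::real) powr (- 3 * real n) = inverse (2 powr real (3 * n))"
    by (simp add: powr_minus[symmetric])
  also have "2 powr real (3 * n) = (2::real) ^ (3 * n)" by (rule powr_realpow) simp
  also have "(2::real) ^ (3 * n) = 8 ^ n" by (simp add: power_mult)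
  finally show ?thesis by (simp add: power_one_over inverse_eq_divide)
qed

theorem mainTheorem13:
  shows "(\<forall>n::nat. n \<ge> 2 \<longrightarrow>
           measure_pmf.prob (rand_mat n) (R11 n - L11 n) \<ge>
             2 * real (n choose 2) * (1/2) ^ n
             - (12 * real (n choose 2) ^ 2 - 4 * real (n choose 2)) * (1/4) ^ n)
       \<and> (\<lambda>n. measure_pmf.prob (rand_mat n) (R11 n - L11 n)
               - (measure_pmf.prob (rand_mat n) (R11 n)
                  - 8 * real (n choose 2) ^ 2 * (1/4) ^ n))
           \<in> O(\<lambda>n. real n ^ 6 * 2 powr (- 3 * real n))"
proof
  show "\<forall>n::nat. n \<ge> 2 \<longrightarrow> measure_pmf.prob (rand_mat n) (R11 n - L11 n) \<ge>
      2 * real (n choose 2) * (1/2) ^ n - (12 * real (n choose 2) ^ 2 - 4 * real (n choose 2)) * (1/4) ^ n"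
    using prob_R11_minus_L11_lower by blast
  show "(\<lambda>n. measure_pmf.prob (rand_mat n) (R11 n - L11 n)
      - (measure_pmf.prob (rand_mat n) (R11 n) - 8 * real (n choose 2) ^ 2 * (1/4) ^ n))
      \<in> O(\<lambda>n. real n ^ 6 * 2 powr (- 3 * real n))"
    using prob_R11_minus_L11_error two_powr_minus_three_times
    by (intro bigoI[where c = 320] eventually_mono[OF eventually_ge_at_top[of 4]]) simp
qed

end
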